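(* Let $M \in \{0,1\}^{n \times n}$ be a $d$-mixed-free binary matrix. Then $M$ admits a rectangle-decomposition $\mathcal{R}$ with $|\mathcal{R}| \in 2^{\mathcal{O}(d)} \cdot n$.
   Context: A $k$-division of $M$ is a pair $(\mathcal{R},\mathscr{C})$ of partitions of $[n]$ each into exactly $k$ contiguous non-empty intervals; its cells are the submatrices with rows in one interval of $\mathcal{R}$ and columns in one interval of $\mathscr{C}$. A matrix is mixed if it is neither horizontal (all its rows are equal) nor vertical (all its columns are equal). $M$ is $d$-mixed-free if it admits no $d$-division all of whose cells are mixed. A $1$-rectangle of $M$ is a contiguous submatrix all of whose entries are $1$; a rectangle-decomposition of $M$ is a collection of pairwise disjoint $1$-rectangles whose union is exactly the set of positions of $1$-entries of $M$. *)

theory Defs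
  imports Main
begin

text \<open>Binary n x n matrices are modelled as M :: nat => nat => bool, with rows and
columns indexed by {0..<n}; True means entry 1. Entries outside the index range
are irrelevant.\<close>

text \<open>A partition of {0..<n} into exactly k contiguous non-empty intervals, given by
its strictly increasing boundary sequence b 0 = 0 < b 1 < ... < b k = n;
the i-th interval (i < k) is {b i..<b (Suc i)}.\<close>
definition interval_partition :: "nat \<Rightarrow> nat \<Rightarrow> (nat \<Rightarrow> nat) \<Rightarrow> bool" where
  "interval_partition n k b \<longleftrightarrow> b 0 = 0 \<and> b k = n \<and> (\<forall>i<k. b i < b (Suc i))"

definition horizontal :: "(nat \<Rightarrow> nat \<Rightarrow> bool) \<Rightarrow> nat set \<Rightarrow> nat set \<Rightarrow> bool" where
  "horizontal M I J \<longleftrightarrow> (\<forall>r\<in>I. \<forall>r'\<in>I. \<forall>c\<in>J. M r c = M r' c)"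

definition vertical :: "(nat \<Rightarrow> nat \<Rightarrow> bool) \<Rightarrow> nat set \<Rightarrow> nat set \<Rightarrow> bool" where
  "vertical M I J \<longleftrightarrow> (\<forall>c\<in>J. \<forall>c'\<in>J. \<forall>r\<in>I. M r c = M r c')"

definition mixed :: "(nat \<Rightarrow> nat \<Rightarrow> bool) \<Rightarrow> nat set \<Rightarrow> nat set \<Rightarrow> bool" where
  "mixed M I J \<longleftrightarrow> \<not> horizontal M I J \<and> \<not> vertical M I J"

definition mixed_free :: "nat \<Rightarrow> nat \<Rightarrow> (nat \<Rightarrow> nat \<Rightarrow> bool) \<Rightarrow> bool" where
  "mixed_free n d M \<longleftrightarrow>
     \<not> (\<exists>br bc. interval_partition n d br \<and> interval_partition n d bc \<and>
          (\<forall>i<d. \<forall>j<d. mixed M {br i..<br (Suc i)} {bc j..<bc (Suc j)}))"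

definition one_rectangle :: "nat \<Rightarrow> (nat \<Rightarrow> nat \<Rightarrow> bool) \<Rightarrow> (nat \<times> nat) set \<Rightarrow> bool" where
  "one_rectangle n M S \<longleftrightarrow>
     (\<exists>a b c e. a < b \<and> b \<le> n \<and> c < e \<and> e \<le> n \<and> S = {a..<b} \<times> {c..<e}) \<and>
     (\<forall>(i, j)\<in>S. M i j)"

definition ones :: "nat \<Rightarrow> (nat \<Rightarrow> nat \<Rightarrow> bool) \<Rightarrow> (nat \<times> nat) set" where
  "ones n M = {(i, j). i < n \<and> j < n \<and> M i j}"

definition rectangle_decomposition ::
  "nat \<Rightarrow> (nat \<Rightarrow> nat \<Rightarrow> bool) \<Rightarrow> (nat \<times> nat) set set \<Rightarrow> bool" where
  "rectangle_decomposition n M R \<longleftrightarrow>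
     finite R \<and> (\<forall>S\<in>R. one_rectangle n M S) \<and> pairwise disjnt R \<and> \<Union>R = ones n M"

end

theory Submission
  imports Defs "HOL-Library.FuncSet"
begin

(* Cut every row into maximal runs of ones and stack equal runs of consecutive rows into
   rectangles, each starting at a run that is new in its row. Apart from runs in the first
   row and full rows, a new run sits next to a mixed 2 x 2 square of its row and the row
   above, and distinct runs get distinct squares; so it suffices to count mixed squares.
   Split by the parities of their corners, the mixed squares form four families of pairwise
   disjoint squares, and a d x d grid in one family would be a d-division into mixed cells.
   A point set without a k x k grid has 2^O(k) n points (Marcus-Tardos contraction into
   p x p blocks, p = 2^(4k+4), with Fox's count of wide blocks): a block meeting at least
   2^(2k+1) columns contains k - 1 cut points separating k of its columns, taken from a family
   of 2^O(k) chains (cut points of small dyadic trees), and k wide blocks of one block column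
   sharing such a chain would form a grid. *)

section \<open>Dyadic trees and separating chains\<close>

datatype dyadic_tree = Leaf | Half bool dyadic_tree | Split dyadic_tree dyadic_tree

fun num_nodes :: "dyadic_tree \<Rightarrow> nat" where
  "num_nodes Leaf = 1"
| "num_nodes (Half b t) = Suc (num_nodes t)"
| "num_nodes (Split t u) = Suc (num_nodes t + num_nodes u)"

fun splits :: "dyadic_tree \<Rightarrow> nat" where
  "splits Leaf = 0"
| "splits (Half b t) = splits t"
| "splits (Split t u) = Suc (splits t + splits u)"

fun halvings :: "dyadic_tree \<Rightarrow> nat" where
  "halvings Leaf = 0"
| "halvings (Half b t) = Suc (halvings t)"
| "halvings (Split t u) = halvings t + halvings u"

lemma num_nodes_eq: "num_nodes t = 2 * splits t + halvings t + 1"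
  by (induction t) auto

fun hits :: "nat set \<Rightarrow> dyadic_tree \<Rightarrow> nat \<Rightarrow> nat \<Rightarrow> bool" where
  "hits S Leaf x h \<longleftrightarrow> S \<inter> {x..<x + 2^h} \<noteq> {}"
| "hits S (Half b t) x (Suc h) \<longleftrightarrow> hits S t (if b then x + 2^h else x) h"
| "hits S (Split t u) x (Suc h) \<longleftrightarrow> hits S t x h \<and> hits S u (x + 2^h) h"
| "hits S _ _ 0 \<longleftrightarrow> False"

fun cuts :: "dyadic_tree \<Rightarrow> nat \<Rightarrow> nat \<Rightarrow> nat list" where
  "cuts (Half b t) x (Suc h) = cuts t (if b then x + 2^h else x) h"
| "cuts (Split t u) x (Suc h) = cuts t x h @ (x + 2^h) # cuts u (x + 2^h) h"
| "cuts _ _ _ = []"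

lemma length_cuts: "hits S t x h \<Longrightarrow> length (cuts t x h) = splits t"
  by (induction S t x h rule: hits.induct) auto

abbreviation hit_gaps :: "nat set \<Rightarrow> nat list \<Rightarrow> bool" where
  "hit_gaps S \<equiv> successively (\<lambda>a b. S \<inter> {a..<b} \<noteq> {})"

lemma successively_nthD:
  "successively P xs \<Longrightarrow> Suc i < length xs \<Longrightarrow> P (xs ! i) (xs ! Suc i)"
  by (induction P xs arbitrary: i rule: successively.induct) (auto simp: nth_Cons split: nat.splits)

lemma hit_gaps_sorted: "hit_gaps S xs \<Longrightarrow> sorted_wrt (<) xs"
  by (auto simp: successively_conv_sorted_wrt[symmetric] elim: successively_mono)

lemma hit_gaps_join:
  "hit_gaps S (xs @ [m]) \<Longrightarrow> hit_gaps S (m # ys) \<Longrightarrow> hit_gaps S (xs @ m # ys)"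
  by (auto simp: successively_append_iff)

lemma hit_gaps_widen:
  "hit_gaps S (a # xs @ [b]) \<Longrightarrow> a' \<le> a \<Longrightarrow> b \<le> b' \<Longrightarrow> hit_gaps S (a' # xs @ [b'])"
  by (induction xs arbitrary: a a') fastforce+

lemma hit_gaps_take: "hit_gaps S (a # xs @ [z]) \<Longrightarrow> hit_gaps S (a # take j xs @ [z])"
proof (induction xs arbitrary: a j)
  case (Cons x xs)
  have "x < z" using hit_gaps_sorted[OF Cons.prems] by simp
  then show ?case using Cons by (cases j) fastforce+
qed simp

lemma hit_gaps_cuts: "hits S t x h \<Longrightarrow> hit_gaps S (x # cuts t x h @ [x + 2^h])"
proof (induction S t x h rule: hits.induct)
  case (2 S b t x h)
  then have "hit_gaps S ((if b then x + 2^h else x) # cuts t (if b then x + 2^h else x) h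
      @ [(if b then x + 2^h else x) + 2^h])" by simp
  then have "hit_gaps S (x # cuts t (if b then x + 2^h else x) h @ [x + 2^Suc h])"
    by (rule hit_gaps_widen) auto
  then show ?case by simp
next
  case (3 S t u x h)
  then show ?case using hit_gaps_join[of S "x # cuts t x h" "x + 2^h"] by (simp add: mult_2 add.assoc)
qed auto

lemma cube_add_le_potential:
  fixes a b :: nat
  assumes "a ^ 3 \<le> 2^h * 2^e" "b ^ 3 \<le> 2^h * 2^f"
  shows "(a + b) ^ 3 \<le> 2^Suc h * 2^(e + f + 2)"
proof -
  have cube: "(c + (c + d)) ^ 3 \<le> 4 * (c ^ 3 + (c + d) ^ 3)" for c d :: nat
    by (simp add: power3_eq_cube algebra_simps)
  have "(a + b) ^ 3 \<le> 4 * (a ^ 3 + b ^ 3)"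
  proof (cases "a \<le> b")
    case True
    then show ?thesis using cube[of a "b - a"] by simp
  next
    case False
    then show ?thesis using cube[of b "a - b"] by (simp add: add.commute)
  qed
  also have "\<dots> \<le> 4 * 2^h * (2^e + 2^f)"
    using assms by (simp add: algebra_simps)
  also have "(2::nat)^e + 2^f \<le> 2^(e + f + 1)"
  proof -
    have "(2::nat)^e \<le> 2^(e + f)" "(2::nat)^f \<le> 2^(e + f)" by (auto intro: power_increasing)
    then show ?thesis by (simp add: mult_2 add_mono)
  qed
  also have "4 * 2^h * 2^(e + f + 1) = (2::nat)^Suc h * 2^(e + f + 2)"
    by (simp add: power_add)
  finally show ?thesis by simp
qed

lemma card_dyadic_halves:
  fixes S :: "nat set"
  shows "card (S \<inter> {x..<x + 2^Suc h}) = card (S \<inter> {x..<x + 2^h}) + card (S \<inter> {x + 2^h..<x + 2^h + 2^h})"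
proof -
  have "S \<inter> {x..<x + 2^Suc h} = (S \<inter> {x..<x + 2^h}) \<union> (S \<inter> {x + 2^h..<x + 2^h + 2^h})"
    by auto
  then show ?thesis by (simp add: card_Un_disjoint disjoint_iff)
qed

definition many_cuts_tree :: "nat \<Rightarrow> nat set \<Rightarrow> nat \<Rightarrow> nat \<Rightarrow> bool" where
  "many_cuts_tree k S x h \<longleftrightarrow> (\<exists>t. hits S t x h \<and> k \<le> splits t + 1 \<and> num_nodes t \<le> h + 8 * k)"

text \<open>The potential \<open>2^h * 2^(2 * splits t - halvings t)\<close> survives both constructors:
  a \<open>Split\<close> adds \<open>2\<close> to the exponent, which pays for \<open>(a + b)^3 \<le> 4 * (a^3 + b^3)\<close>;
  a \<open>Half\<close> whose other half misses \<open>S\<close> doubles \<open>2^h\<close> and spends one unit of the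
  exponent, and once the exponent is exhausted the tree is replaced by a \<open>Leaf\<close>.\<close>

definition few_cuts_tree :: "nat \<Rightarrow> nat set \<Rightarrow> nat \<Rightarrow> nat \<Rightarrow> bool" where
  "few_cuts_tree k S x h \<longleftrightarrow> (\<exists>t. hits S t x h \<and> splits t + 2 \<le> k \<and> halvings t \<le> 2 * splits t \<and>
     card (S \<inter> {x..<x + 2^h}) ^ 3 \<le> 2^h * 2 ^ (2 * splits t - halvings t))"

lemma many_cuts_tree_Half:
  "many_cuts_tree k S (if b then x + 2^h else x) h \<Longrightarrow> many_cuts_tree k S x (Suc h)"
proof -
  assume "many_cuts_tree k S (if b then x + 2^h else x) h"
  then obtain t where "hits S t (if b then x + 2^h else x) h" "k \<le> splits t + 1" "num_nodes t \<le> h + 8 * k"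
    unfolding many_cuts_tree_def by blast
  then show ?thesis unfolding many_cuts_tree_def by (intro exI[of _ "Half b t"]) simp
qed

lemma few_cuts_tree_Half:
  assumes few: "few_cuts_tree k S y h" and y: "y = (if b then x + 2^h else x)"
    and same: "S \<inter> {x..<x + 2^Suc h} = S \<inter> {y..<y + 2^h}" and ne: "S \<inter> {y..<y + 2^h} \<noteq> {}"
  shows "few_cuts_tree k S x (Suc h)"
proof -
  obtain t where t: "hits S t y h" "splits t + 2 \<le> k" "halvings t \<le> 2 * splits t"
    and pot: "card (S \<inter> {x..<x + 2^Suc h}) ^ 3 \<le> 2^h * 2 ^ (2 * splits t - halvings t)"
    using few same unfolding few_cuts_tree_def by auto
  show ?thesis
  proof (cases "halvings t < 2 * splits t")
    case True
    then have "2 * splits t - halvings t = Suc (2 * splits (Half b t) - halvings (Half b t))"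
      by simp
    then have "(2::nat)^h * 2 ^ (2 * splits t - halvings t) = 2^Suc h * 2 ^ (2 * splits (Half b t) - halvings (Half b t))"
      by simp
    then show ?thesis
      unfolding few_cuts_tree_def using t pot True y
      by (intro exI[of _ "Half b t"]) auto
  next
    case False
    have "card (S \<inter> {x..<x + 2^Suc h}) ^ 3 \<le> 2^Suc h * 2 ^ (2 * splits Leaf - halvings Leaf)"
      using pot False t(3) by simp
    moreover have "hits S Leaf x (Suc h)" using ne same by auto
    ultimately show ?thesis
      unfolding few_cuts_tree_def using t(2) by (intro exI[of _ Leaf]) auto
  qed
qed

lemma few_cuts_tree_Split:
  assumes "few_cuts_tree k S x h" "few_cuts_tree k S (x + 2^h) h"
  shows "few_cuts_tree k S x (Suc h) \<or> many_cuts_tree k S x (Suc h)"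
proof -
  obtain t where t: "hits S t x h" "splits t + 2 \<le> k" "halvings t \<le> 2 * splits t"
    and pot_t: "card (S \<inter> {x..<x + 2^h}) ^ 3 \<le> 2^h * 2 ^ (2 * splits t - halvings t)"
    using assms(1) unfolding few_cuts_tree_def by blast
  obtain u where u: "hits S u (x + 2^h) h" "splits u + 2 \<le> k" "halvings u \<le> 2 * splits u"
    and pot_u: "card (S \<inter> {x + 2^h..<x + 2^h + 2^h}) ^ 3 \<le> 2^h * 2 ^ (2 * splits u - halvings u)"
    using assms(2) unfolding few_cuts_tree_def by blast
  have hits: "hits S (Split t u) x (Suc h)" using t(1) u(1) by simp
  show ?thesis
  proof (cases "splits t + splits u + 3 \<le> k")
    case True
    have "card (S \<inter> {x..<x + 2^Suc h}) ^ 3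
        \<le> 2^Suc h * 2 ^ ((2 * splits t - halvings t) + (2 * splits u - halvings u) + 2)"
      unfolding card_dyadic_halves by (rule cube_add_le_potential[OF pot_t pot_u])
    also have "(2 * splits t - halvings t) + (2 * splits u - halvings u) + 2
        = 2 * splits (Split t u) - halvings (Split t u)"
      using t(3) u(3) by simp
    finally show ?thesis
      unfolding few_cuts_tree_def using hits True t(3) u(3)
      by (intro disjI1 exI[of _ "Split t u"]) auto
  next
    case False
    have "num_nodes (Split t u) \<le> Suc h + 8 * k"
      using num_nodes_eq[of t] num_nodes_eq[of u] t(2,3) u(2,3) by simp
    then show ?thesis
      unfolding many_cuts_tree_def using hits False by (intro disjI2 exI[of _ "Split t u"]) auto
  qed
qed

lemma many_or_few_cuts_tree:
  assumes "0 < k"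
  shows "S \<inter> {x..<x + 2^h} \<noteq> {} \<Longrightarrow> many_cuts_tree k S x h \<or> few_cuts_tree k S x h"
proof (induction h arbitrary: x)
  case 0
  then have "S \<inter> {x..<x + 2^0} = {x}" by auto
  then show ?case
    unfolding many_cuts_tree_def few_cuts_tree_def using assms
    by (cases "k \<le> 1") (auto intro!: exI[of _ Leaf])
next
  case (Suc h)
  let ?L = "S \<inter> {x..<x + 2^h}" and ?R = "S \<inter> {x + 2^h..<x + 2^h + 2^h}"
  have split: "S \<inter> {x..<x + 2^Suc h} = ?L \<union> ?R" by auto
  show ?case
  proof (cases "?L = {} \<or> ?R = {}")
    case True
    define b where "b = (?L = {})"
    have b: "S \<inter> {x..<x + 2^Suc h} = S \<inter> {(if b then x + 2^h else x)..<(if b then x + 2^h else x) + 2^h}"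
      using split True unfolding b_def by auto
    then have ne: "S \<inter> {(if b then x + 2^h else x)..<(if b then x + 2^h else x) + 2^h} \<noteq> {}"
      using Suc.prems by simp
    then show ?thesis
      using Suc.IH[OF ne] many_cuts_tree_Half few_cuts_tree_Half[OF _ refl b ne] by blast
  next
    case False
    then have "many_cuts_tree k S x h \<or> few_cuts_tree k S x h"
      "many_cuts_tree k S (x + 2^h) h \<or> few_cuts_tree k S (x + 2^h) h"
      using Suc.IH by auto
    then show ?thesis
      using many_cuts_tree_Half[of k S False x h] many_cuts_tree_Half[of k S True x h]
        few_cuts_tree_Split[of k S x h] by fastforce
  qed
qed

lemma not_few_cuts_tree:
  assumes S: "S \<subseteq> {..<2^(4*k+4)}" and big: "2^(2*k+1) \<le> card S"
  shows "\<not> few_cuts_tree k S 0 (4*k+4)"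
proof
  assume "few_cuts_tree k S 0 (4*k+4)"
  moreover have "S \<inter> {0..<0 + 2^(4*k+4)} = S" using S by auto
  ultimately obtain t where t: "splits t + 2 \<le> k"
    and pot: "card S ^ 3 \<le> 2^(4*k+4) * 2 ^ (2 * splits t - halvings t)"
    unfolding few_cuts_tree_def by auto
  have "(2::nat) ^ (2 * splits t - halvings t) \<le> 2 ^ (2*k - 4)"
    using t by (intro power_increasing) auto
  have "6*k+3 = (2*k+1) * 3" by simp
  then have "(2::nat) ^ (6*k+3) = (2^(2*k+1)) ^ 3" by (simp only: power_mult)
  also have "\<dots> \<le> card S ^ 3" using big by (rule power_mono) simp
  also have "\<dots> \<le> 2^(4*k+4) * 2 ^ (2*k - 4)"
    using pot \<open>2 ^ (2 * splits t - halvings t) \<le> 2 ^ (2*k - 4)\<close> by (meson le_trans mult_le_mono2)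
  also have "\<dots> = 2 ^ (6*k)" using t by (simp flip: power_add)
  finally show False by simp
qed

fun tree_code :: "dyadic_tree \<Rightarrow> nat list" where
  "tree_code Leaf = [0]"
| "tree_code (Half b t) = (if b then 1 else 2) # tree_code t"
| "tree_code (Split t u) = 3 # tree_code t @ tree_code u"

lemma tree_code_prefix_free: "tree_code t @ r = tree_code t' @ r' \<Longrightarrow> t = t' \<and> r = r'"
proof (induction t arbitrary: t' r r')
  case Leaf
  then show ?case by (cases t') (auto split: if_splits)
next
  case (Half b t)
  then show ?case by (cases t') (auto split: if_splits)
next
  case (Split t u)
  show ?case
  proof (cases t')
    case (Split t'' u')
    then have "tree_code t @ tree_code u @ r = tree_code t'' @ tree_code u' @ r'"
      using Split.prems by simp
    then show ?thesis using Split.IH \<open>t' = Split t'' u'\<close> by blast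
  qed (use Split.prems in \<open>auto split: if_splits\<close>)
qed

lemma inj_tree_code: "inj tree_code"
  using tree_code_prefix_free[where r = "[]" and r' = "[]"] by (auto intro: injI)

lemma length_tree_code: "length (tree_code t) = num_nodes t"
  by (induction t) auto

lemma set_tree_code: "set (tree_code t) \<subseteq> {0..<4}"
  by (induction t) auto

lemma tree_code_num_nodes_le:
  "tree_code ` {t. num_nodes t \<le> N} \<subseteq> {xs. set xs \<subseteq> {0..<4} \<and> length xs \<le> N}"
  using length_tree_code set_tree_code by auto

lemma finite_num_nodes_le: "finite {t. num_nodes t \<le> N}"
proof -
  have "finite (tree_code ` {t. num_nodes t \<le> N})"
    by (rule finite_subset[OF tree_code_num_nodes_le finite_lists_length_le]) simp
  then show ?thesis using inj_tree_code by (simp add: finite_image_iff inj_on_subset)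
qed

lemma card_num_nodes_le: "card {t. num_nodes t \<le> N} \<le> 4 ^ Suc N"
proof -
  let ?L = "{xs. set xs \<subseteq> {0..<4::nat} \<and> length xs \<le> N}"
  have "card {t. num_nodes t \<le> N} = card (tree_code ` {t. num_nodes t \<le> N})"
    using inj_tree_code by (simp add: card_image inj_on_subset)
  also have "\<dots> \<le> card ?L"
    by (rule card_mono[OF finite_lists_length_le tree_code_num_nodes_le]) simp
  also have "\<dots> = (\<Sum>i\<le>N. 4 ^ i)"
    using card_lists_length_le[of "{0..<4::nat}" N] by simp
  also have "\<dots> \<le> 4 ^ Suc N"
    by (induction N) auto
  finally show ?thesis .
qed

definition chain_family :: "nat \<Rightarrow> nat list set" where
  "chain_family k = (\<lambda>t. take (k - 1) (cuts t 0 (4*k+4))) ` {t. num_nodes t \<le> 12*k+4}"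

lemma finite_chain_family: "finite (chain_family k)"
  unfolding chain_family_def using finite_num_nodes_le by blast

lemma card_chain_family_le: "card (chain_family k) \<le> 2 ^ (24*k+10)"
proof -
  have "card (chain_family k) \<le> card {t. num_nodes t \<le> 12*k+4}"
    unfolding chain_family_def by (rule card_image_le[OF finite_num_nodes_le])
  also have "\<dots> \<le> 4 ^ Suc (12*k+4)" by (rule card_num_nodes_le)
  also have "\<dots> = 2 ^ (2 * Suc (12*k+4))" by (simp only: power_mult) simp
  also have "2 * Suc (12*k+4) = 24*k+10" by simp
  finally show ?thesis .
qed

lemma separating_chain_exists:
  assumes "0 < k" and S: "S \<subseteq> {..<2^(4*k+4)}" and big: "2^(2*k+1) \<le> card S"
  shows "\<exists>\<pi>\<in>chain_family k. length \<pi> = k - 1 \<and> hit_gaps S (0 # \<pi> @ [2^(4*k+4)])"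
proof -
  have "S \<inter> {0..<0 + 2^(4*k+4)} = S" using S by auto
  moreover have "S \<noteq> {}" using big by (auto simp del: power_Suc)
  ultimately have "S \<inter> {0..<0 + 2^(4*k+4)} \<noteq> {}" by simp
  then have "many_cuts_tree k S 0 (4*k+4)"
    using many_or_few_cuts_tree[OF \<open>0 < k\<close>] not_few_cuts_tree[OF S big] by blast
  then obtain t where t: "hits S t 0 (4*k+4)" "k \<le> splits t + 1" "num_nodes t \<le> 12*k+4"
    unfolding many_cuts_tree_def by auto
  let ?\<pi> = "take (k - 1) (cuts t 0 (4*k+4))"
  have "?\<pi> \<in> chain_family k" unfolding chain_family_def using t(3) by blast
  moreover have "length ?\<pi> = k - 1" using t(2) length_cuts[OF t(1)] by simp
  moreover have "hit_gaps S (0 # ?\<pi> @ [2^(4*k+4)])"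
    using hit_gaps_take hit_gaps_cuts[OF t(1)] by simp
  ultimately show ?thesis by blast
qed

section \<open>Grid-free point sets\<close>

definition division_with :: "nat \<Rightarrow> nat \<Rightarrow> (nat set \<Rightarrow> nat set \<Rightarrow> bool) \<Rightarrow> bool" where
  "division_with n k P \<longleftrightarrow> (\<exists>br bc. interval_partition n k br \<and> interval_partition n k bc \<and>
     (\<forall>i<k. \<forall>j<k. P {br i..<br (Suc i)} {bc j..<bc (Suc j)}))"

lemma mixed_free_iff_not_division_with: "mixed_free n d M \<longleftrightarrow> \<not> division_with n d (mixed M)"
  unfolding mixed_free_def division_with_def by blast

lemma interval_partition_stretch:
  assumes "0 < k" "\<forall>i<k. b i < b (Suc i)" "b k \<le> n"
  shows "interval_partition n k (b(0 := 0, k := n))"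
    and "i < k \<Longrightarrow> {b i..<b (Suc i)} \<subseteq> {(b(0 := 0, k := n)) i..<(b(0 := 0, k := n)) (Suc i)}"
proof -
  have le: "(b(0 := 0, k := n)) i \<le> b i" "b (Suc i) \<le> (b(0 := 0, k := n)) (Suc i)" if "i < k" for i
    using assms that by auto
  show "interval_partition n k (b(0 := 0, k := n))"
    unfolding interval_partition_def
  proof (intro conjI allI impI)
    fix i assume "i < k"
    then show "(b(0 := 0, k := n)) i < (b(0 := 0, k := n)) (Suc i)"
      using le[OF \<open>i < k\<close>] assms(2) by (meson le_less_trans less_le_trans)
  qed (use assms(1) in auto)
  show "{b i..<b (Suc i)} \<subseteq> {(b(0 := 0, k := n)) i..<(b(0 := 0, k := n)) (Suc i)}" if "i < k"
    using le[OF that] by auto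
qed

text \<open>Moving the outer boundaries to \<open>0\<close> and \<open>n\<close> only enlarges the cells.\<close>

lemma division_withI_stretch:
  assumes mono: "\<And>I J I' J'. P I J \<Longrightarrow> I \<subseteq> I' \<Longrightarrow> J \<subseteq> J' \<Longrightarrow> P I' J'"
    and "0 < k" and b: "\<forall>i<k. b i < b (Suc i)" "b k \<le> n" and c: "\<forall>j<k. c j < c (Suc j)" "c k \<le> n"
    and cells: "\<forall>i<k. \<forall>j<k. P {b i..<b (Suc i)} {c j..<c (Suc j)}"
  shows "division_with n k P"
  unfolding division_with_def
proof (intro exI conjI allI impI)
  show "interval_partition n k (b(0 := 0, k := n))" "interval_partition n k (c(0 := 0, k := n))"
    using interval_partition_stretch(1) assms(2) b c by blast+
  fix i j assume "i < k" "j < k"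
  show "P {(b(0 := 0, k := n)) i..<(b(0 := 0, k := n)) (Suc i)} {(c(0 := 0, k := n)) j..<(c(0 := 0, k := n)) (Suc j)}"
    by (rule mono[OF cells[rule_format, OF \<open>i < k\<close> \<open>j < k\<close>]
          interval_partition_stretch(2)[OF assms(2) b \<open>i < k\<close>]
          interval_partition_stretch(2)[OF assms(2) c \<open>j < k\<close>]])
qed

definition has_grid :: "nat \<Rightarrow> nat \<Rightarrow> (nat \<times> nat) set \<Rightarrow> bool" where
  "has_grid n k A \<longleftrightarrow> division_with n k (\<lambda>I J. A \<inter> I \<times> J \<noteq> {})"

lemma has_gridI_stretch:
  assumes "0 < k" "\<forall>i<k. b i < b (Suc i)" "b k \<le> n" "\<forall>j<k. c j < c (Suc j)" "c k \<le> n"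
    and "\<forall>i<k. \<forall>j<k. A \<inter> {b i..<b (Suc i)} \<times> {c j..<c (Suc j)} \<noteq> {}"
  shows "has_grid n k A"
  unfolding has_grid_def by (rule division_withI_stretch[OF _ assms]) blast

lemma has_grid_swapI: "has_grid n k A \<Longrightarrow> has_grid n k (prod.swap ` A)"
proof -
  assume "has_grid n k A"
  then obtain br bc where "interval_partition n k br" "interval_partition n k bc"
    and cells: "\<forall>i<k. \<forall>j<k. A \<inter> {br i..<br (Suc i)} \<times> {bc j..<bc (Suc j)} \<noteq> {}"
    unfolding has_grid_def division_with_def by blast
  moreover have "\<forall>i<k. \<forall>j<k. prod.swap ` A \<inter> {bc i..<bc (Suc i)} \<times> {br j..<br (Suc j)} \<noteq> {}"
  proof (intro allI impI)
    fix i j assume "i < k" "j < k"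
    then obtain x y where "(x, y) \<in> A" "x \<in> {br j..<br (Suc j)}" "y \<in> {bc i..<bc (Suc i)}"
      using cells by blast
    then have "(y, x) \<in> prod.swap ` A \<inter> {bc i..<bc (Suc i)} \<times> {br j..<br (Suc j)}"
      by (auto intro: rev_image_eqI)
    then show "prod.swap ` A \<inter> {bc i..<bc (Suc i)} \<times> {br j..<br (Suc j)} \<noteq> {}" by blast
  qed
  ultimately show ?thesis
    unfolding has_grid_def division_with_def by (intro exI[of _ bc] exI[of _ br] conjI)
qed

lemma has_grid_swap: "has_grid n k (prod.swap ` A) \<longleftrightarrow> has_grid n k A"
  using has_grid_swapI[of n k A] has_grid_swapI[of n k "prod.swap ` A"]
  by (auto simp: image_image)

lemma interval_partition_map_last:
  assumes "interval_partition N k b" "strict_mono f" "f (b (k - 1)) < n"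
  shows "\<forall>i<k. ((\<lambda>i. f (b i))(k := n)) i < ((\<lambda>i. f (b i))(k := n)) (Suc i)"
proof (intro allI impI)
  fix i assume "i < k"
  show "((\<lambda>i. f (b i))(k := n)) i < ((\<lambda>i. f (b i))(k := n)) (Suc i)"
  proof (cases "Suc i = k")
    case True
    then have "i = k - 1" by simp
    then show ?thesis using assms(3) True by simp
  next
    case False
    then show ?thesis
      using assms(1,2) \<open>i < k\<close> unfolding interval_partition_def by (simp add: strict_monoD)
  qed
qed

lemma has_grid_shrink:
  assumes "has_grid N k A" "A \<subseteq> {..<n} \<times> {..<n}" "0 < k"
  shows "has_grid n k A"
proof -
  obtain br bc where br: "interval_partition N k br" and bc: "interval_partition N k bc"
    and cells: "\<forall>i<k. \<forall>j<k. A \<inter> {br i..<br (Suc i)} \<times> {bc j..<bc (Suc j)} \<noteq> {}"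
    using assms(1) unfolding has_grid_def division_with_def by blast
  define br' where "br' = br(k := n)"
  define bc' where "bc' = bc(k := n)"
  have cells': "\<forall>i<k. \<forall>j<k. A \<inter> {br' i..<br' (Suc i)} \<times> {bc' j..<bc' (Suc j)} \<noteq> {}"
  proof (intro allI impI)
    fix i j assume ij: "i < k" "j < k"
    obtain x y where xy: "(x, y) \<in> A" "x \<in> {br i..<br (Suc i)}" "y \<in> {bc j..<bc (Suc j)}"
      using cells ij by blast
    moreover have "x < n" "y < n" using xy(1) assms(2) by auto
    ultimately have "x \<in> {br' i..<br' (Suc i)}" "y \<in> {bc' j..<bc' (Suc j)}"
      using ij unfolding br'_def bc'_def by auto
    then show "A \<inter> {br' i..<br' (Suc i)} \<times> {bc' j..<bc' (Suc j)} \<noteq> {}"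
      using xy(1) by blast
  qed
  have "br (k - 1) < n" "bc (k - 1) < n"
    using cells'[rule_format, of "k - 1" "k - 1"] assms(3) unfolding br'_def bc'_def by auto
  then have "\<forall>i<k. br' i < br' (Suc i)" "\<forall>j<k. bc' j < bc' (Suc j)"
    using interval_partition_map_last[OF br, of "\<lambda>x. x"] interval_partition_map_last[OF bc, of "\<lambda>x. x"]
    unfolding br'_def bc'_def by (simp_all add: strict_mono_def)
  then show ?thesis
    using cells' by (intro has_gridI_stretch[OF \<open>0 < k\<close>, of br' n bc']) (simp_all add: br'_def bc'_def)
qed

lemma div_eq_iff_atLeastLessThan:
  fixes x p X :: nat
  assumes "0 < p"
  shows "x div p = X \<longleftrightarrow> x \<in> {p * X..<p * X + p}"
proof -
  have "x div p = X \<longleftrightarrow> X \<le> x div p \<and> x div p < Suc X" by auto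
  also have "\<dots> \<longleftrightarrow> x \<in> {p * X..<p * X + p}"
    using assms by (simp add: less_eq_div_iff_mult_less_eq div_less_iff_less_mult algebra_simps)
  finally show ?thesis .
qed

definition contract :: "nat \<Rightarrow> (nat \<times> nat) set \<Rightarrow> (nat \<times> nat) set" where
  "contract p A = (\<lambda>(x, y). (x div p, y div p)) ` A"

definition block :: "nat \<Rightarrow> (nat \<times> nat) set \<Rightarrow> nat \<times> nat \<Rightarrow> (nat \<times> nat) set" where
  "block p A B = {(x, y) \<in> A. (x div p, y div p) = B}"

definition block_cols :: "nat \<Rightarrow> (nat \<times> nat) set \<Rightarrow> nat \<times> nat \<Rightarrow> nat set" where
  "block_cols p A B = (\<lambda>y. y mod p) ` snd ` block p A B"

lemma mem_block_cols:
  "s \<in> block_cols p A B \<longleftrightarrow> (\<exists>x y. (x, y) \<in> A \<and> (x div p, y div p) = B \<and> s = y mod p)"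
  unfolding block_cols_def block_def by force

lemma contract_subset:
  assumes "0 < p" "A \<subseteq> {..<p * m} \<times> {..<p * m}"
  shows "contract p A \<subseteq> {..<m} \<times> {..<m}"
  using assms by (auto simp: contract_def less_mult_imp_div_less mult.commute)

lemma mem_contract: "(X, Y) \<in> contract p A \<longleftrightarrow> (\<exists>x y. (x, y) \<in> A \<and> x div p = X \<and> y div p = Y)"
  unfolding contract_def by force

lemma has_grid_contract:
  assumes "0 < p" "0 < k" "has_grid m k (contract p A)"
  shows "has_grid (p * m) k A"
proof -
  obtain br bc where br: "interval_partition m k br" and bc: "interval_partition m k bc"
    and cells: "\<forall>i<k. \<forall>j<k. contract p A \<inter> {br i..<br (Suc i)} \<times> {bc j..<bc (Suc j)} \<noteq> {}"
    using assms(3) unfolding has_grid_def division_with_def by blast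
  have scaled: "x \<in> {p * b i..<p * b (Suc i)}" if "x div p \<in> {b i..<b (Suc i)}" for x i b
    using that assms(1) by (simp add: less_eq_div_iff_mult_less_eq div_less_iff_less_mult mult.commute)
  show ?thesis
  proof (rule has_gridI_stretch[of k "\<lambda>i. p * br i" "p * m" "\<lambda>j. p * bc j"])
    show "\<forall>i<k. \<forall>j<k. A \<inter> {p * br i..<p * br (Suc i)} \<times> {p * bc j..<p * bc (Suc j)} \<noteq> {}"
    proof (intro allI impI)
      fix i j assume "i < k" "j < k"
      then obtain X Y where "(X, Y) \<in> contract p A" "X \<in> {br i..<br (Suc i)}" "Y \<in> {bc j..<bc (Suc j)}"
        using cells by blast
      then obtain x y where "(x, y) \<in> A" "x div p \<in> {br i..<br (Suc i)}" "y div p \<in> {bc j..<bc (Suc j)}"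
        unfolding mem_contract by blast
      then show "A \<inter> {p * br i..<p * br (Suc i)} \<times> {p * bc j..<p * bc (Suc j)} \<noteq> {}"
        using scaled[of x br i] scaled[of y bc j] by blast
    qed
  qed (use br bc assms(1,2) in \<open>simp_all add: interval_partition_def\<close>)
qed

lemma strict_mono_enumeration:
  fixes H :: "nat set"
  assumes "finite H" "k \<le> card H"
  obtains X where "\<And>i j. i < j \<Longrightarrow> j < k \<Longrightarrow> X i < X j" "\<And>i. i < k \<Longrightarrow> X i \<in> H"
proof
  let ?xs = "sorted_list_of_set H"
  show "?xs ! i < ?xs ! j" if "i < j" "j < k" for i j
    using that assms by (intro sorted_wrt_nth_less[OF strict_sorted_list_of_set]) auto
  show "?xs ! i \<in> H" if "i < k" for i
  proof -
    have "i < length ?xs" using that assms(2) by simp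
    then have "?xs ! i \<in> set ?xs" by (rule nth_mem)
    then show ?thesis using assms(1) by simp
  qed
qed

lemma block_point_in_gap:
  assumes "0 < p" "hit_gaps (block_cols p A (X, Y)) l" "Suc j < length l"
  obtains x y where "(x, y) \<in> A" "p * X \<le> x" "x < p * X + p" "p * Y + l ! j \<le> y" "y < p * Y + l ! Suc j"
proof -
  obtain s where s: "s \<in> block_cols p A (X, Y)" "l ! j \<le> s" "s < l ! Suc j"
    using successively_nthD[OF assms(2,3)] by auto
  then obtain x y where xy: "(x, y) \<in> A" "x div p = X" "y div p = Y" "s = y mod p"
    unfolding mem_block_cols by blast
  have "y = p * Y + s" using mult_div_mod_eq[of p y] xy(3,4) by simp
  then show thesis
    using that xy(1) div_eq_iff_atLeastLessThan[OF assms(1), of x X] xy(2) s(2,3) by simp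
qed

lemma has_grid_of_common_chain:
  assumes "0 < k" "0 < p" and A: "A \<subseteq> {..<p * m} \<times> {..<p * m}"
    and H: "finite H" "k \<le> card H" "H \<subseteq> {X. (X, Y) \<in> contract p A}"
    and \<pi>: "length \<pi> = k - 1" "\<forall>X\<in>H. hit_gaps (block_cols p A (X, Y)) (0 # \<pi> @ [p])"
  shows "has_grid (p * m) k A"
proof -
  obtain X where X_mono: "\<And>i j. i < j \<Longrightarrow> j < k \<Longrightarrow> X i < X j" and X_in: "\<And>i. i < k \<Longrightarrow> X i \<in> H"
    using strict_mono_enumeration[OF H(1,2)] by blast
  have X_less: "X i < m" if "i < k" for i
    using X_in[OF that] H(3) contract_subset[OF \<open>0 < p\<close> A] by auto
  have "Y < m"
    using X_in[OF \<open>0 < k\<close>] H(3) contract_subset[OF \<open>0 < p\<close> A] by auto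
  define l where "l = 0 # \<pi> @ [p]"
  have l: "sorted_wrt (<) l" "length l = Suc k" "l ! k = p"
    using hit_gaps_sorted \<pi> X_in[OF \<open>0 < k\<close>] \<open>0 < k\<close> unfolding l_def by (blast, auto simp: nth_append)
  define X' where "X' = X(k := m)"
  have X'_Suc: "X i < X' (Suc i)" if "i < k" for i
    using X_mono[of i "Suc i"] X_less[OF that] that unfolding X'_def by (cases "Suc i = k") auto
  show ?thesis
  proof (rule has_gridI_stretch[OF \<open>0 < k\<close>, of "\<lambda>i. p * X' i" "p * m" "\<lambda>j. p * Y + l ! j"])
    show "\<forall>i<k. p * X' i < p * X' (Suc i)"
      using X'_Suc \<open>0 < p\<close> unfolding X'_def by simp
    show "\<forall>j<k. p * Y + l ! j < p * Y + l ! Suc j"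
      using sorted_wrt_nth_less[OF l(1)] l(2) by simp
    show "p * Y + l ! k \<le> p * m"
      using \<open>Y < m\<close> l(3) mult_le_mono2[of "Suc Y" m p] by simp
    show "\<forall>i<k. \<forall>j<k. A \<inter> {p * X' i..<p * X' (Suc i)} \<times> {p * Y + l ! j..<p * Y + l ! Suc j} \<noteq> {}"
    proof (intro allI impI)
      fix i j assume "i < k" "j < k"
      then obtain x y where "(x, y) \<in> A" "p * X i \<le> x" "x < p * X i + p"
          "p * Y + l ! j \<le> y" "y < p * Y + l ! Suc j"
        using block_point_in_gap[OF \<open>0 < p\<close> \<pi>(2)[rule_format, OF X_in], of i j] l(2) unfolding l_def
        by auto
      moreover have "p * X i + p \<le> p * X' (Suc i)"
        using X'_Suc[OF \<open>i < k\<close>] mult_le_mono2[of "Suc (X i)" "X' (Suc i)" p] by simp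
      ultimately have "(x, y) \<in> A \<inter> {p * X' i..<p * X' (Suc i)} \<times> {p * Y + l ! j..<p * Y + l ! Suc j}"
        using \<open>i < k\<close> unfolding X'_def by auto
      then show "A \<inter> {p * X' i..<p * X' (Suc i)} \<times> {p * Y + l ! j..<p * Y + l ! Suc j} \<noteq> {}"
        by blast
    qed
  qed (simp add: X'_def)
qed

definition wide_blocks :: "nat \<Rightarrow> nat \<Rightarrow> (nat \<times> nat) set \<Rightarrow> (nat \<times> nat) set" where
  "wide_blocks k p A = {B \<in> contract p A. 2^(2*k+1) \<le> card (block_cols p A B)}"

lemma card_wide_blocks_in_column:
  assumes "0 < k" and p: "p = 2^(4*k+4)" and A: "A \<subseteq> {..<p * m} \<times> {..<p * m}"
    and no_grid: "\<not> has_grid (p * m) k A"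
  shows "card {X. (X, Y) \<in> wide_blocks k p A} \<le> (k - 1) * card (chain_family k)"
proof (rule ccontr)
  define G where "G = {X. (X, Y) \<in> wide_blocks k p A}"
  assume "\<not> card {X. (X, Y) \<in> wide_blocks k p A} \<le> (k - 1) * card (chain_family k)"
  then have many: "(k - 1) * card (chain_family k) < card G" unfolding G_def by simp
  have "0 < p" using p by simp
  have "G \<subseteq> {..<m}" using contract_subset[OF \<open>0 < p\<close> A] unfolding G_def wide_blocks_def by auto
  then have "finite G" by (rule finite_subset) simp
  have "\<forall>X\<in>G. \<exists>\<pi>. \<pi> \<in> chain_family k \<and> length \<pi> = k - 1 \<and> hit_gaps (block_cols p A (X, Y)) (0 # \<pi> @ [p])"
  proof
    fix X assume "X \<in> G"
    have "block_cols p A (X, Y) \<subseteq> {..<2^(4*k+4)}" unfolding block_cols_def p by auto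
    then show "\<exists>\<pi>. \<pi> \<in> chain_family k \<and> length \<pi> = k - 1 \<and> hit_gaps (block_cols p A (X, Y)) (0 # \<pi> @ [p])"
      using separating_chain_exists[OF \<open>0 < k\<close>] \<open>X \<in> G\<close> p unfolding G_def wide_blocks_def by blast
  qed
  then obtain f where f: "\<forall>X\<in>G. f X \<in> chain_family k \<and> length (f X) = k - 1
      \<and> hit_gaps (block_cols p A (X, Y)) (0 # f X @ [p])"
    by (metis (no_types) bchoice)
  have "G \<noteq> {}" using many by auto
  then have "chain_family k \<noteq> {}" using f by blast
  then obtain \<pi> where fibre: "card G \<le> card (f -` {\<pi>} \<inter> G) * card (chain_family k)"
    using pigeonhole_card[of f G "chain_family k"] f \<open>finite G\<close> finite_chain_family by blast
  define H where "H = f -` {\<pi>} \<inter> G"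
  have "k - 1 < card H"
    using many fibre unfolding H_def by (meson less_le_trans mult_less_cancel2)
  then have "k \<le> card H" "H \<noteq> {}" using \<open>0 < k\<close> by auto
  then obtain X0 where "X0 \<in> H" by blast
  have "finite H" "H \<subseteq> {X. (X, Y) \<in> contract p A}"
    using \<open>finite G\<close> unfolding H_def G_def wide_blocks_def by auto
  moreover have "\<forall>X\<in>H. hit_gaps (block_cols p A (X, Y)) (0 # \<pi> @ [p])"
    using f unfolding H_def by auto
  moreover have "length \<pi> = k - 1"
    using f \<open>X0 \<in> H\<close> unfolding H_def by auto
  ultimately have "has_grid (p * m) k A"
    using has_grid_of_common_chain[OF \<open>0 < k\<close> \<open>0 < p\<close> A] \<open>k \<le> card H\<close> by blast
  then show False using no_grid by contradiction
qed

lemma card_wide_blocks: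
  assumes "0 < k" "p = 2^(4*k+4)" "A \<subseteq> {..<p * m} \<times> {..<p * m}" "\<not> has_grid (p * m) k A"
  shows "card (wide_blocks k p A) \<le> 2^(25*k+10) * m"
proof -
  let ?W = "\<lambda>Y. {X. (X, Y) \<in> wide_blocks k p A}"
  have "0 < p" using assms(2) by simp
  have "wide_blocks k p A \<subseteq> (\<Union>Y<m. (\<lambda>X. (X, Y)) ` ?W Y)"
    using contract_subset[OF \<open>0 < p\<close> assms(3)] unfolding wide_blocks_def by force
  moreover have "finite (?W Y)" for Y
    using contract_subset[OF \<open>0 < p\<close> assms(3)] unfolding wide_blocks_def
    by (auto intro: finite_subset[of _ "{..<m}"])
  ultimately have "card (wide_blocks k p A) \<le> card (\<Union>Y<m. (\<lambda>X. (X, Y)) ` ?W Y)"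
    by (intro card_mono) auto
  also have "\<dots> \<le> (\<Sum>Y<m. card ((\<lambda>X. (X, Y)) ` ?W Y))"
    by (rule card_UN_le) simp
  also have "\<dots> \<le> (\<Sum>Y<m. (k - 1) * card (chain_family k))"
    using card_wide_blocks_in_column[OF assms] by (intro sum_mono) (simp add: card_image inj_on_def)
  also have "\<dots> = (k - 1) * card (chain_family k) * m" by simp
  also have "k - 1 \<le> 2^k" using less_exp[of k] by linarith
  then have "(k - 1) * card (chain_family k) \<le> 2^k * 2^(24*k+10)"
    using card_chain_family_le by (intro mult_mono) auto
  also have "(2::nat)^k * 2^(24*k+10) = 2^(25*k+10)" by (simp flip: power_add)
  finally show ?thesis by simp
qed

lemma card_block_cols: "card (block_cols p A B) = card (snd ` block p A B)"
proof -
  have "inj_on (\<lambda>y. y mod p) (snd ` block p A B)"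
    by (rule inj_onI) (auto simp: block_def, metis mult_div_mod_eq)
  then show ?thesis unfolding block_cols_def by (rule card_image)
qed

lemma block_swap: "block p (prod.swap ` A) (prod.swap B) = prod.swap ` block p A B"
  unfolding block_def by (cases B) auto

lemma contract_swap: "contract p (prod.swap ` A) = prod.swap ` contract p A"
  unfolding contract_def by (auto simp: image_image intro!: image_cong)

lemma card_block_le_square:
  assumes "0 < p"
  shows "card (block p A (X, Y)) \<le> p * p"
proof -
  have "block p A (X, Y) \<subseteq> {p * X..<p * X + p} \<times> {p * Y..<p * Y + p}"
    using div_eq_iff_atLeastLessThan[OF assms] by (auto simp: block_def)
  from card_mono[OF _ this] show ?thesis by (simp add: card_cartesian_product)
qed

lemma card_block_le_thin:
  assumes "finite A"
  shows "card (block p A B) \<le> card (block_cols p (prod.swap ` A) (prod.swap B)) * card (block_cols p A B)"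
proof -
  have "block p A B \<subseteq> A" unfolding block_def by auto
  then have "finite (block p A B)" using assms by (rule finite_subset)
  have "block p A B \<subseteq> fst ` block p A B \<times> snd ` block p A B" by force
  then have "card (block p A B) \<le> card (fst ` block p A B) * card (snd ` block p A B)"
    using card_mono[of "fst ` block p A B \<times> snd ` block p A B"] \<open>finite (block p A B)\<close>
    by (simp add: card_cartesian_product)
  also have "card (fst ` block p A B) = card (block_cols p (prod.swap ` A) (prod.swap B))"
    unfolding card_block_cols block_swap by (simp add: image_image)
  finally show ?thesis by (simp add: card_block_cols)
qed

text \<open>\<open>prod.swap B \<in> wide_blocks k p (prod.swap ` A)\<close> says that the block meets at
  least \<open>2^(2*k+1)\<close> rows; a block meeting fewer rows and fewer columns has at most
  \<open>2^(4*k+2)\<close> points.\<close>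

lemma card_block_le:
  assumes "0 < p" "finite A"
  shows "card (block p A B) \<le> 2^(4*k+2) + (if B \<in> wide_blocks k p A then p * p else 0)
    + (if prod.swap B \<in> wide_blocks k p (prod.swap ` A) then p * p else 0)"
proof (cases "B \<in> wide_blocks k p A \<or> prod.swap B \<in> wide_blocks k p (prod.swap ` A)")
  case True
  then show ?thesis using card_block_le_square[OF assms(1), of A "fst B" "snd B"] by auto
next
  case not_wide: False
  show ?thesis
  proof (cases "B \<in> contract p A")
    case False
    then have "block p A B = {}" unfolding contract_def block_def by auto
    then show ?thesis by simp
  next
    case True
    then have "prod.swap B \<in> contract p (prod.swap ` A)" unfolding contract_swap by simp
    with True not_wide have "card (block_cols p (prod.swap ` A) (prod.swap B)) \<le> 2^(2*k+1)"
        "card (block_cols p A B) \<le> 2^(2*k+1)"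
      unfolding wide_blocks_def by auto
    then have "card (block p A B) \<le> 2^(2*k+1) * 2^(2*k+1)"
      using card_block_le_thin[OF assms(2), of p B] by (meson le_trans mult_le_mono)
    also have "(2::nat)^(2*k+1) * 2^(2*k+1) = 2^(4*k+2)" by (simp flip: power_add)
    finally show ?thesis using not_wide by simp
  qed
qed

lemma card_le_contract:
  assumes "0 < k" and p: "p = 2^(4*k+4)" and A: "A \<subseteq> {..<p * m} \<times> {..<p * m}"
    and no_grid: "\<not> has_grid (p * m) k A"
  shows "card A \<le> 2^(4*k+2) * card (contract p A) + 2^(33*k+19) * m"
proof -
  let ?C = "contract p A" and ?sA = "prod.swap ` A"
  have "0 < p" using p by simp
  have "finite A" using A by (rule finite_subset) simp
  then have "finite ?C" unfolding contract_def by simp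
  have tall: "card (?C \<inter> {B. prod.swap B \<in> wide_blocks k p ?sA}) \<le> 2^(25*k+10) * m"
  proof -
    have "wide_blocks k p ?sA \<subseteq> contract p ?sA" unfolding wide_blocks_def by auto
    moreover have "finite (contract p ?sA)" using \<open>finite A\<close> by (simp add: contract_def)
    ultimately have "finite (wide_blocks k p ?sA)" by (rule finite_subset)
    then have "card (?C \<inter> {B. prod.swap B \<in> wide_blocks k p ?sA}) \<le> card (wide_blocks k p ?sA)"
      by (intro card_inj_on_le[of prod.swap]) auto
    moreover have "?sA \<subseteq> {..<p * m} \<times> {..<p * m}" "\<not> has_grid (p * m) k ?sA"
      using A no_grid has_grid_swap by auto
    ultimately show ?thesis using card_wide_blocks[OF \<open>0 < k\<close> p] by (meson le_trans)
  qed
  have wide_subset: "wide_blocks k p A \<subseteq> ?C" unfolding wide_blocks_def by auto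
  have "(\<Union>B\<in>?C. block p A B) = A" unfolding contract_def block_def by auto
  with card_UN_le[OF \<open>finite ?C\<close>, of "block p A"]
  have "card A \<le> (\<Sum>B\<in>?C. card (block p A B))" by simp
  also have "\<dots> \<le> (\<Sum>B\<in>?C. 2^(4*k+2) + (if B \<in> wide_blocks k p A then p * p else 0)
      + (if prod.swap B \<in> wide_blocks k p ?sA then p * p else 0))"
    by (intro sum_mono card_block_le \<open>0 < p\<close> \<open>finite A\<close>)
  also have "\<dots> = 2^(4*k+2) * card ?C + p * p * card (wide_blocks k p A)
      + p * p * card (?C \<inter> {B. prod.swap B \<in> wide_blocks k p ?sA})"
    using \<open>finite ?C\<close> wide_subset by (simp add: sum.distrib sum.If_cases Int_absorb1)
  also have "\<dots> \<le> 2^(4*k+2) * card ?C + (p * p * (2^(25*k+10) * m) + p * p * (2^(25*k+10) * m))"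
    unfolding add.assoc using card_wide_blocks[OF \<open>0 < k\<close> p A no_grid] tall
    by (intro add_left_mono add_mono mult_le_mono2)
  also have "p * p * (2^(25*k+10) * m) + p * p * (2^(25*k+10) * m) = (2 * p * p * 2^(25*k+10)) * m"
    by (simp only: mult_2[symmetric] mult.assoc)
  also have "2 * p * p * 2^(25*k+10) = (2::nat) ^ (1 + (4*k+4) + (4*k+4) + (25*k+10))"
    unfolding p power_add by simp
  also have "1 + (4*k+4) + (4*k+4) + (25*k+10) = 33*k+19" by simp
  finally show ?thesis .
qed

lemma power_add_eq: "m + n = k \<Longrightarrow> x ^ m * x ^ n = (x::nat) ^ k"
  using power_add[of x m n] by simp

lemma card_grid_free_pow:
  assumes "0 < k" and p: "p = 2^(4*k+4)"
  shows "A \<subseteq> {..<p ^ e} \<times> {..<p ^ e} \<Longrightarrow> \<not> has_grid (p ^ e) k A \<Longrightarrow> card A \<le> 2^(29*k+16) * p ^ e"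
proof (induction e arbitrary: A)
  case 0
  then have "A \<subseteq> {(0, 0)}" by auto
  then have "card A \<le> 1" using card_mono[of "{(0, 0)}" A] by simp
  also have "\<dots> \<le> 2^(29*k+16) * p ^ 0" by simp
  finally show ?case .
next
  case (Suc e)
  define Q where "Q = (2::nat) ^ (33*k+18)"
  have Q1: "2^(4*k+2) * 2^(29*k+16) = Q" unfolding Q_def by (rule power_add_eq) simp
  have "2 ^ 1 * Q = 2^(33*k+19)" unfolding Q_def by (rule power_add_eq) simp
  then have Q2: "2^(33*k+19) = 2 * Q" by (simp only: power_one_right)
  have "2 ^ 2 * Q = 2 ^ (33*k+20)" "2^(29*k+16) * p = 2 ^ (33*k+20)"
    unfolding Q_def p by (rule power_add_eq, simp)+
  then have Q3: "2 ^ 2 * Q = 2^(29*k+16) * p" by (rule trans[OF _ sym])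
  have "0 < p" using p by simp
  have A: "A \<subseteq> {..<p * p ^ e} \<times> {..<p * p ^ e}" and no_grid: "\<not> has_grid (p * p ^ e) k A"
    using Suc.prems by simp_all
  have "card (contract p A) \<le> 2^(29*k+16) * p ^ e"
    using Suc.IH contract_subset[OF \<open>0 < p\<close> A] has_grid_contract[OF \<open>0 < p\<close> \<open>0 < k\<close>] no_grid
    by blast
  then have "2^(4*k+2) * card (contract p A) \<le> 2^(4*k+2) * (2^(29*k+16) * p ^ e)"
    by (rule mult_le_mono2)
  with card_le_contract[OF \<open>0 < k\<close> p A no_grid]
  have "card A \<le> 2^(4*k+2) * (2^(29*k+16) * p ^ e) + 2^(33*k+19) * p ^ e"
    by linarith
  also have "\<dots> = Q * p ^ e + 2 * Q * p ^ e"
    by (simp only: mult.assoc[symmetric] Q1 Q2)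
  also have "\<dots> \<le> 2 ^ 2 * Q * p ^ e"
    by simp
  also have "\<dots> = 2^(29*k+16) * p ^ Suc e"
    by (simp only: power_Suc mult.assoc[symmetric] Q3)
  finally show ?case .
qed

lemma card_grid_free:
  assumes "0 < k" and A: "A \<subseteq> {..<n} \<times> {..<n}" and no_grid: "\<not> has_grid n k A"
  shows "card A \<le> 2^(33*k+20) * n"
proof (cases "n = 0")
  case True
  then show ?thesis using A by simp
next
  case False
  define p :: nat where "p = 2^(4*k+4)"
  have "2 \<le> p" unfolding p_def using power_increasing[of 1 "4*k+4" "2::nat"] by simp
  then have "n \<le> p ^ n" using less_exp[of n] power_mono[of 2 p n] by simp
  then have "\<exists>e. n \<le> p ^ e" by blast
  define e where "e = (LEAST e. n \<le> p ^ e)"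
  have n_le: "n \<le> p ^ e" unfolding e_def by (rule LeastI_ex) fact
  have le_pn: "p ^ e \<le> p * n"
  proof (cases e)
    case (Suc e')
    then have "e' < e" by simp
    then have "\<not> n \<le> p ^ e'" unfolding e_def by (rule not_less_Least)
    then show ?thesis using Suc by simp
  qed (use False \<open>2 \<le> p\<close> in simp)
  have "A \<subseteq> {..<p ^ e} \<times> {..<p ^ e}" using A n_le by auto
  moreover have "\<not> has_grid (p ^ e) k A" using has_grid_shrink[OF _ A \<open>0 < k\<close>] no_grid by blast
  ultimately have "card A \<le> 2^(29*k+16) * p ^ e" by (rule card_grid_free_pow[OF \<open>0 < k\<close> p_def])
  also have "\<dots> \<le> 2^(29*k+16) * (p * n)" using le_pn by simp
  also have "\<dots> = 2^(33*k+20) * n"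
    using power_add_eq[of "29*k+16" "4*k+4" "33*k+20" 2] unfolding p_def by (simp add: algebra_simps)
  finally show ?thesis .
qed

section \<open>Mixed squares\<close>

definition mixed_squares :: "nat \<Rightarrow> (nat \<Rightarrow> nat \<Rightarrow> bool) \<Rightarrow> (nat \<times> nat) set" where
  "mixed_squares n M = {(i, j). i + 2 \<le> n \<and> j + 2 \<le> n \<and> mixed M {i..<i+2} {j..<j+2}}"

text \<open>Squares whose corners have fixed parities \<open>\<rho>\<close>, \<open>\<sigma>\<close> are pairwise disjoint, so the
  halved corners of such squares form a grid-free point set.\<close>

definition mixed_squares_class :: "nat \<Rightarrow> (nat \<Rightarrow> nat \<Rightarrow> bool) \<Rightarrow> nat \<Rightarrow> nat \<Rightarrow> (nat \<times> nat) set" where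
  "mixed_squares_class n M \<rho> \<sigma> = {(x, y). (2 * x + \<rho>, 2 * y + \<sigma>) \<in> mixed_squares n M}"

lemma mixed_mono: "mixed M I J \<Longrightarrow> I \<subseteq> I' \<Longrightarrow> J \<subseteq> J' \<Longrightarrow> mixed M I' J'"
  unfolding mixed_def horizontal_def vertical_def by blast

lemma not_has_grid_mixed_squares_class:
  assumes "0 < d" and mixed_free: "mixed_free n d M"
  shows "\<not> has_grid n d (mixed_squares_class n M \<rho> \<sigma>)"
proof
  let ?A = "mixed_squares_class n M \<rho> \<sigma>"
  assume "has_grid n d ?A"
  then obtain br bc where br: "interval_partition n d br" and bc: "interval_partition n d bc"
    and cells: "\<forall>i<d. \<forall>j<d. ?A \<inter> {br i..<br (Suc i)} \<times> {bc j..<bc (Suc j)} \<noteq> {}"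
    unfolding has_grid_def division_with_def by blast
  define br' where "br' = (\<lambda>i. 2 * br i + \<rho>)(d := n)"
  define bc' where "bc' = (\<lambda>j. 2 * bc j + \<sigma>)(d := n)"
  have square: "{2 * x + \<rho>..<2 * x + \<rho> + 2} \<subseteq> {br' i..<br' (Suc i)}"
      "{2 * y + \<sigma>..<2 * y + \<sigma> + 2} \<subseteq> {bc' j..<bc' (Suc j)}"
      "mixed M {2 * x + \<rho>..<2 * x + \<rho> + 2} {2 * y + \<sigma>..<2 * y + \<sigma> + 2}"
    if "i < d" "j < d" "(x, y) \<in> ?A" "x \<in> {br i..<br (Suc i)}" "y \<in> {bc j..<bc (Suc j)}" for i j x y
    using that unfolding mixed_squares_class_def mixed_squares_def br'_def bc'_def
    by (auto simp: numeral_2_eq_2)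
  have "division_with n d (mixed M)"
  proof (rule division_withI_stretch[OF mixed_mono \<open>0 < d\<close>])
    have "?A \<inter> {br (d - 1)..<br (Suc (d - 1))} \<times> {bc (d - 1)..<bc (Suc (d - 1))} \<noteq> {}"
      using cells \<open>0 < d\<close> by (simp del: Suc_diff_1 One_nat_def)
    then obtain x y where "(x, y) \<in> ?A" "x \<in> {br (d - 1)..<br (Suc (d - 1))}" "y \<in> {bc (d - 1)..<bc (Suc (d - 1))}"
      by blast
    then have last: "2 * br (d - 1) + \<rho> < n" "2 * bc (d - 1) + \<sigma> < n"
      unfolding mixed_squares_class_def mixed_squares_def by auto
    have mono: "strict_mono (\<lambda>x. 2 * x + \<rho>)" "strict_mono (\<lambda>y. 2 * y + \<sigma>)"
      by (auto intro: strict_monoI)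
    show "\<forall>i<d. br' i < br' (Suc i)"
      unfolding br'_def by (rule interval_partition_map_last[OF br mono(1) last(1)])
    show "\<forall>j<d. bc' j < bc' (Suc j)"
      unfolding bc'_def by (rule interval_partition_map_last[OF bc mono(2) last(2)])
    show "\<forall>i<d. \<forall>j<d. mixed M {br' i..<br' (Suc i)} {bc' j..<bc' (Suc j)}"
    proof (intro allI impI)
      fix i j assume "i < d" "j < d"
      then obtain x y where xy: "(x, y) \<in> ?A" "x \<in> {br i..<br (Suc i)}" "y \<in> {bc j..<bc (Suc j)}"
        using cells by blast
      show "mixed M {br' i..<br' (Suc i)} {bc' j..<bc' (Suc j)}"
        using square[OF \<open>i < d\<close> \<open>j < d\<close> xy] by (rule mixed_mono[rotated 1])
    qed
  qed (simp_all add: br'_def bc'_def)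
  then show False using mixed_free mixed_free_iff_not_division_with by blast
qed

lemma mixed_squares_subset_classes:
  "mixed_squares n M
    \<subseteq> (\<Union>\<rho><2. \<Union>\<sigma><2. (\<lambda>(x, y). (2 * x + \<rho>, 2 * y + \<sigma>)) ` mixed_squares_class n M \<rho> \<sigma>)"
proof
  fix z assume "z \<in> mixed_squares n M"
  moreover obtain i j where z: "z = (i, j)" by fastforce
  ultimately have "(i div 2, j div 2) \<in> mixed_squares_class n M (i mod 2) (j mod 2)"
    unfolding mixed_squares_class_def by simp
  then have "z \<in> (\<lambda>(x, y). (2 * x + i mod 2, 2 * y + j mod 2)) ` mixed_squares_class n M (i mod 2) (j mod 2)"
    unfolding z by (rule rev_image_eqI) simp
  then show "z \<in> (\<Union>\<rho><2. \<Union>\<sigma><2. (\<lambda>(x, y). (2 * x + \<rho>, 2 * y + \<sigma>)) ` mixed_squares_class n M \<rho> \<sigma>)"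
    by (intro UN_I[of "i mod 2"] UN_I[of "j mod 2"]) simp_all
qed

lemma card_mixed_squares:
  assumes "0 < d" "mixed_free n d M"
  shows "card (mixed_squares n M) \<le> 2^(33*d+22) * n"
proof -
  let ?class = "\<lambda>\<rho> \<sigma>. (\<lambda>(x, y). (2 * x + \<rho>, 2 * y + \<sigma>)) ` mixed_squares_class n M \<rho> \<sigma>"
  have subset: "mixed_squares_class n M \<rho> \<sigma> \<subseteq> {..<n} \<times> {..<n}" for \<rho> \<sigma>
    unfolding mixed_squares_class_def mixed_squares_def by auto
  then have finite: "finite (mixed_squares_class n M \<rho> \<sigma>)" for \<rho> \<sigma>
    by (rule finite_subset) simp
  have "card (mixed_squares n M) \<le> card (\<Union>\<rho><2. \<Union>\<sigma><2. ?class \<rho> \<sigma>)"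
    by (rule card_mono[OF _ mixed_squares_subset_classes]) (simp add: finite)
  also have "\<dots> \<le> (\<Sum>\<rho><2. card (\<Union>\<sigma><2. ?class \<rho> \<sigma>))"
    by (rule card_UN_le) simp
  also have "\<dots> \<le> (\<Sum>\<rho><2. \<Sum>\<sigma><2. card (?class \<rho> \<sigma>))"
    by (intro sum_mono card_UN_le) simp
  also have "\<dots> \<le> (\<Sum>\<rho><2::nat. \<Sum>\<sigma><2::nat. 2^(33*d+20) * n)"
  proof (intro sum_mono)
    fix \<rho> \<sigma> :: nat
    have "card (?class \<rho> \<sigma>) \<le> card (mixed_squares_class n M \<rho> \<sigma>)"
      by (rule card_image_le[OF finite])
    also have "\<dots> \<le> 2^(33*d+20) * n"
      by (rule card_grid_free[OF \<open>0 < d\<close> subset not_has_grid_mixed_squares_class[OF assms]])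
    finally show "card (?class \<rho> \<sigma>) \<le> 2^(33*d+20) * n" .
  qed
  also have "\<dots> = 2^2 * 2^(33*d+20) * n" by simp
  also have "\<dots> = 2^(33*d+22) * n" using power_add_eq[of 2 "33*d+20" "33*d+22" 2] by simp
  finally show ?thesis .
qed

section \<open>Stacked runs\<close>

definition maximal_run :: "nat \<Rightarrow> (nat \<Rightarrow> nat \<Rightarrow> bool) \<Rightarrow> nat \<Rightarrow> nat \<Rightarrow> nat \<Rightarrow> bool" where
  "maximal_run n M i a b \<longleftrightarrow> i < n \<and> a < b \<and> b \<le> n \<and> (\<forall>c\<in>{a..<b}. M i c)
     \<and> (0 < a \<longrightarrow> \<not> M i (a - 1)) \<and> (b < n \<longrightarrow> \<not> M i b)"

lemma maximal_run_eq_or_apart: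
  assumes "maximal_run n M i a b" "maximal_run n M i a' b'"
  shows "(a = a' \<and> b = b') \<or> b < a' \<or> b' < a"
proof -
  have start_inside: False if "maximal_run n M i a b" "maximal_run n M i a' b'" "a < a'" "a' \<le> b" for a b a' b'
  proof (cases "a' = b")
    case True
    then show False using that unfolding maximal_run_def by auto
  next
    case False
    then have "a' - 1 \<in> {a..<b}" using that(3,4) by auto
    then show False using that(1,2,3) unfolding maximal_run_def by auto
  qed
  have end_inside: False if "maximal_run n M i a b" "maximal_run n M i a' b'" "a' \<le> b" "b < b'" for a b a' b'
    using that unfolding maximal_run_def by auto
  show ?thesis
    using start_inside[OF assms] start_inside[OF assms(2,1)] end_inside[OF assms] end_inside[OF assms(2,1)]
    by (meson linorder_neqE_nat not_le)
qed

lemma maximal_run_exists: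
  assumes "i < n" "c < n" "M i c"
  shows "\<exists>a b. maximal_run n M i a b \<and> c \<in> {a..<b}"
proof -
  define a where "a = (LEAST a. \<forall>c'\<in>{a..c}. M i c')"
  define b where "b = (LEAST b. c < b \<and> (b = n \<or> \<not> M i b))"
  have ones_left: "\<forall>c'\<in>{a..c}. M i c'"
    unfolding a_def by (rule LeastI[of _ c]) (use assms(3) in simp)
  have "a \<le> c" unfolding a_def by (rule Least_le) (use assms(3) in simp)
  have left: "\<not> M i (a - 1)" if "0 < a"
  proof
    assume "M i (a - 1)"
    have "{a - 1..c} = insert (a - 1) {a..c}" using that \<open>a \<le> c\<close> by auto
    then have "\<forall>c'\<in>{a - 1..c}. M i c'" using ones_left \<open>M i (a - 1)\<close> by simp
    moreover have "a - 1 < a" using that by simp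
    ultimately show False using not_less_Least[of "a - 1"] unfolding a_def by blast
  qed
  have b: "c < b \<and> (b = n \<or> \<not> M i b)"
    unfolding b_def by (rule LeastI[of _ n]) (use assms(2) in simp)
  have "b \<le> n" unfolding b_def by (rule Least_le) (use assms(2) in simp)
  have ones_right: "M i c'" if "c < c'" "c' < b" for c'
    using not_less_Least[of c' "\<lambda>b. c < b \<and> (b = n \<or> \<not> M i b)"] that \<open>b \<le> n\<close>
    unfolding b_def[symmetric] by auto
  have "maximal_run n M i a b"
    unfolding maximal_run_def
  proof (intro conjI ballI impI)
    fix c' assume "c' \<in> {a..<b}"
    then show "M i c'" using ones_left ones_right by (cases "c' \<le> c") auto
  qed (use assms(1) \<open>a \<le> c\<close> b \<open>b \<le> n\<close> left in auto)
  then show ?thesis using \<open>a \<le> c\<close> b by auto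
qed

definition run_start :: "nat \<Rightarrow> (nat \<Rightarrow> nat \<Rightarrow> bool) \<Rightarrow> nat \<Rightarrow> nat \<Rightarrow> nat \<Rightarrow> bool" where
  "run_start n M i a b \<longleftrightarrow> maximal_run n M i a b \<and> (i = 0 \<or> \<not> maximal_run n M (i - 1) a b)"

definition run_stack :: "nat \<Rightarrow> (nat \<Rightarrow> nat \<Rightarrow> bool) \<Rightarrow> nat \<Rightarrow> nat \<Rightarrow> nat \<Rightarrow> nat set" where
  "run_stack n M i a b = {r. i \<le> r \<and> (\<forall>r'\<in>{i..r}. maximal_run n M r' a b)}"

definition run_starts :: "nat \<Rightarrow> (nat \<Rightarrow> nat \<Rightarrow> bool) \<Rightarrow> (nat \<times> nat \<times> nat) set" where
  "run_starts n M = {(i, a, b). run_start n M i a b}"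

definition run_rectangles :: "nat \<Rightarrow> (nat \<Rightarrow> nat \<Rightarrow> bool) \<Rightarrow> (nat \<times> nat) set set" where
  "run_rectangles n M = (\<lambda>(i, a, b). run_stack n M i a b \<times> {a..<b}) ` run_starts n M"

lemma mem_run_rectangles:
  "S \<in> run_rectangles n M \<longleftrightarrow> (\<exists>i a b. run_start n M i a b \<and> S = run_stack n M i a b \<times> {a..<b})"
  unfolding run_rectangles_def run_starts_def by force

lemma finite_run_starts: "finite (run_starts n M)"
proof (rule finite_subset)
  show "run_starts n M \<subseteq> {..<n} \<times> {..<n} \<times> {..n}"
    unfolding run_starts_def run_start_def maximal_run_def by auto
qed simp

lemma run_stack_eq_interval:
  assumes "maximal_run n M i a b"
  shows "\<exists>e. i < e \<and> e \<le> n \<and> run_stack n M i a b = {i..<e}"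
proof -
  define e where "e = (LEAST e. i < e \<and> \<not> maximal_run n M e a b)"
  have "i < n" using assms unfolding maximal_run_def by simp
  have e: "i < e \<and> \<not> maximal_run n M e a b"
    unfolding e_def by (rule LeastI[where P = "\<lambda>e. i < e \<and> \<not> maximal_run n M e a b" and k = n])
      (use \<open>i < n\<close> in \<open>simp add: maximal_run_def\<close>)
  have "e \<le> n" unfolding e_def by (rule Least_le[where P = "\<lambda>e. i < e \<and> \<not> maximal_run n M e a b"])
      (use \<open>i < n\<close> in \<open>simp add: maximal_run_def\<close>)
  have below: "maximal_run n M r a b" if "i \<le> r" "r < e" for r
    using assms not_less_Least[of r "\<lambda>e. i < e \<and> \<not> maximal_run n M e a b"] that
    unfolding e_def[symmetric] by (cases "r = i") auto
  have "run_stack n M i a b = {i..<e}"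
  proof (intro equalityI subsetI)
    fix r assume "r \<in> run_stack n M i a b"
    then have r: "i \<le> r" "\<forall>r'\<in>{i..r}. maximal_run n M r' a b" unfolding run_stack_def by auto
    have "r < e"
    proof (rule ccontr)
      assume "\<not> r < e"
      then have "e \<in> {i..r}" using e by auto
      then show False using r(2) e by blast
    qed
    then show "r \<in> {i..<e}" using r(1) by simp
  next
    fix r assume "r \<in> {i..<e}"
    then show "r \<in> run_stack n M i a b" unfolding run_stack_def using below by auto
  qed
  then show ?thesis using e \<open>e \<le> n\<close> by blast
qed

lemma one_rectangle_run_stack:
  assumes "run_start n M i a b"
  shows "one_rectangle n M (run_stack n M i a b \<times> {a..<b})"
proof -
  have run: "maximal_run n M i a b" using assms unfolding run_start_def by simp
  obtain e where "i < e" "e \<le> n" "run_stack n M i a b = {i..<e}"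
    using run_stack_eq_interval[OF run] by blast
  moreover have "a < b" "b \<le> n" using run unfolding maximal_run_def by auto
  moreover have "M r c" if "r \<in> run_stack n M i a b" "c \<in> {a..<b}" for r c
    using that unfolding run_stack_def maximal_run_def by auto
  ultimately show ?thesis unfolding one_rectangle_def by blast
qed

lemma run_start_below:
  assumes "maximal_run n M r a b"
  shows "\<exists>i. run_start n M i a b \<and> r \<in> run_stack n M i a b"
proof -
  define i where "i = (LEAST i. i \<le> r \<and> (\<forall>r'\<in>{i..r}. maximal_run n M r' a b))"
  have i: "i \<le> r \<and> (\<forall>r'\<in>{i..r}. maximal_run n M r' a b)"
    unfolding i_def by (rule LeastI[of _ r]) (use assms in simp)
  have "\<not> maximal_run n M (i - 1) a b" if "0 < i"
  proof
    assume "maximal_run n M (i - 1) a b"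
    moreover have "{i - 1..r} = insert (i - 1) {i..r}" using i that by auto
    ultimately have "\<forall>r'\<in>{i - 1..r}. maximal_run n M r' a b" using i by simp
    moreover have "\<not> (i - 1 \<le> r \<and> (\<forall>r'\<in>{i - 1..r}. maximal_run n M r' a b))"
      using not_less_Least[where P = "\<lambda>i. i \<le> r \<and> (\<forall>r'\<in>{i..r}. maximal_run n M r' a b)" and k = "i - 1"]
        that unfolding i_def[symmetric] by simp
    ultimately show False using i by simp
  qed
  then have "run_start n M i a b" using i unfolding run_start_def by auto
  moreover have "r \<in> run_stack n M i a b" using i unfolding run_stack_def by auto
  ultimately show ?thesis by blast
qed

lemma run_start_unique:
  assumes "run_start n M i a b" "run_start n M i' a b"
    and "r \<in> run_stack n M i a b" "r \<in> run_stack n M i' a b"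
  shows "i = i'"
proof (rule ccontr)
  have between: "maximal_run n M r' a b" if "r \<in> run_stack n M j a b" "j \<le> r'" "r' \<le> r" for j r'
    using that unfolding run_stack_def by auto
  assume "i \<noteq> i'"
  then consider "i < i'" | "i' < i" by linarith
  then show False
  proof cases
    case 1
    then have "maximal_run n M (i' - 1) a b"
      using between[OF assms(3)] assms(4) unfolding run_stack_def by auto
    then show False using assms(2) 1 unfolding run_start_def by auto
  next
    case 2
    then have "maximal_run n M (i - 1) a b"
      using between[OF assms(4)] assms(3) unfolding run_stack_def by auto
    then show False using assms(1) 2 unfolding run_start_def by auto
  qed
qed

lemma pairwise_disjnt_run_rectangles: "pairwise disjnt (run_rectangles n M)"
proof (rule pairwiseI)
  fix S S' assume "S \<in> run_rectangles n M" "S' \<in> run_rectangles n M" "S \<noteq> S'"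
  then obtain i a b i' a' b' where S: "S = run_stack n M i a b \<times> {a..<b}" "run_start n M i a b"
    and S': "S' = run_stack n M i' a' b' \<times> {a'..<b'}" "run_start n M i' a' b'"
    unfolding mem_run_rectangles by blast
  show "disjnt S S'"
  proof (rule ccontr)
    assume "\<not> disjnt S S'"
    then obtain r c where r: "r \<in> run_stack n M i a b" "r \<in> run_stack n M i' a' b'"
      and c: "c \<in> {a..<b}" "c \<in> {a'..<b'}"
      unfolding disjnt_def S S' by blast
    have "maximal_run n M r a b" "maximal_run n M r a' b'"
      using r unfolding run_stack_def by auto
    then have "a = a' \<and> b = b'" using maximal_run_eq_or_apart c by fastforce
    moreover from this have "i = i'" using run_start_unique S(2) S'(2) r by blast
    ultimately show False using S S' \<open>S \<noteq> S'\<close> by simp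
  qed
qed

lemma Union_run_rectangles: "\<Union> (run_rectangles n M) = ones n M"
proof (intro equalityI subsetI)
  fix z assume "z \<in> \<Union> (run_rectangles n M)"
  then obtain i a b where "z \<in> run_stack n M i a b \<times> {a..<b}"
    by (metis UnionE mem_run_rectangles)
  then show "z \<in> ones n M" unfolding run_stack_def maximal_run_def ones_def by auto
next
  fix z assume "z \<in> ones n M"
  then obtain r c where z: "z = (r, c)" "r < n" "c < n" "M r c" unfolding ones_def by auto
  then obtain a b where "maximal_run n M r a b" "c \<in> {a..<b}" using maximal_run_exists by blast
  moreover obtain i where "run_start n M i a b" "r \<in> run_stack n M i a b"
    using run_start_below[OF \<open>maximal_run n M r a b\<close>] by blast
  ultimately show "z \<in> \<Union> (run_rectangles n M)"
    unfolding z by (metis UnionI mem_run_rectangles mem_Sigma_iff)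
qed

lemma rectangle_decomposition_run_rectangles: "rectangle_decomposition n M (run_rectangles n M)"
proof -
  have "finite (run_rectangles n M)"
    unfolding run_rectangles_def using finite_run_starts by simp
  moreover have "one_rectangle n M S" if "S \<in> run_rectangles n M" for S
    using that one_rectangle_run_stack unfolding mem_run_rectangles by blast
  ultimately show ?thesis
    unfolding rectangle_decomposition_def using pairwise_disjnt_run_rectangles Union_run_rectangles by blast
qed

lemma mixed_square_iff:
  "mixed M {r..<r+2} {j..<j+2} \<longleftrightarrow>
     (M r j \<noteq> M (Suc r) j \<or> M r (Suc j) \<noteq> M (Suc r) (Suc j)) \<and>
     (M r j \<noteq> M r (Suc j) \<or> M (Suc r) j \<noteq> M (Suc r) (Suc j))"
proof -
  have "{r..<r+2} = {r, Suc r}" "{j..<j+2} = {j, Suc j}" by auto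
  then show ?thesis unfolding mixed_def horizontal_def vertical_def by auto
qed

lemma eq_if_Suc_eq:
  assumes "\<forall>j. s \<le> j \<and> j < t \<longrightarrow> f j = f (Suc j)" "s \<le> x" "x \<le> t"
  shows "f x = (f s :: bool)"
  using assms(2,3)
proof (induction x rule: dec_induct)
  case (step x)
  then show ?case using assms(1) by simp
qed simp

text \<open>Without a mixed square the difference of the two rows would be constant on
  \<open>{s..t}\<close>, hence everywhere true, which forces every square to be vertical and the
  lower row to be constant.\<close>

lemma mixed_square_in_window:
  assumes c: "s \<le> c" "c \<le> t" "M r c \<noteq> M (Suc r) c"
    and e: "s \<le> e" "e \<le> t" "s \<le> e'" "e' \<le> t" "M (Suc r) e \<noteq> M (Suc r) e'"
  shows "\<exists>j. s \<le> j \<and> j < t \<and> mixed M {r..<r+2} {j..<j+2}"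
proof (rule ccontr)
  assume none: "\<not> ?thesis"
  let ?D = "\<lambda>j. M r j \<noteq> M (Suc r) j"
  have "?D j = ?D (Suc j)" if "s \<le> j" "j < t" for j
    using none that unfolding mixed_square_iff by blast
  then have "?D x = ?D s" if "s \<le> x" "x \<le> t" for x
    using eq_if_Suc_eq[of s t ?D x] that by blast
  then have D: "?D x" if "s \<le> x" "x \<le> t" for x
    using that c by blast
  have "M (Suc r) j = M (Suc r) (Suc j)" if "s \<le> j" "j < t" for j
    using none D[of j] D[of "Suc j"] that unfolding mixed_square_iff by auto
  then have "M (Suc r) x = M (Suc r) s" if "s \<le> x" "x \<le> t" for x
    using eq_if_Suc_eq[of s t "M (Suc r)" x] that by blast
  then show False using e by metis
qed

lemma maximal_run_if_rows_agree:
  assumes run: "maximal_run n M r' a b" and "r < n"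
    and agree: "\<forall>c. a \<le> c + 1 \<and> c \<le> b \<and> c < n \<longrightarrow> M r c = M r' c"
  shows "maximal_run n M r a b"
  using assms unfolding maximal_run_def by auto

lemma mixed_square_below_run_start:
  assumes start: "run_start n M i a b" and "0 < i" and not_full: "\<not> (a = 0 \<and> b = n)"
  shows "\<exists>j. j + 1 \<in> {a..b} \<and> (i - 1, j) \<in> mixed_squares n M"
proof -
  obtain r where i: "i = Suc r" using \<open>0 < i\<close> by (cases i) auto
  have run: "maximal_run n M (Suc r) a b" and not_run: "\<not> maximal_run n M r a b"
    using start unfolding run_start_def i by auto
  then have "Suc r < n" "a < b" "b \<le> n" unfolding maximal_run_def by auto
  define s where "s = (if 0 < a then a - 1 else a)"
  define t where "t = (if b < n then b else b - 1)"
  have "\<not> (\<forall>c. a \<le> c + 1 \<and> c \<le> b \<and> c < n \<longrightarrow> M r c = M (Suc r) c)"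
    using maximal_run_if_rows_agree[OF run, of r] \<open>Suc r < n\<close> not_run by auto
  then obtain c where c: "a \<le> c + 1" "c \<le> b" "c < n" "M r c \<noteq> M (Suc r) c"
    by blast
  have "\<exists>e e'. s \<le> e \<and> e \<le> t \<and> s \<le> e' \<and> e' \<le> t \<and> M (Suc r) e \<noteq> M (Suc r) e'"
  proof (cases "0 < a")
    case True
    then show ?thesis using run \<open>a < b\<close> unfolding s_def t_def maximal_run_def
      by (intro exI[of _ "a - 1"] exI[of _ a]) auto
  next
    case False
    then have "b < n" using not_full \<open>b \<le> n\<close> by auto
    then show ?thesis using run \<open>a < b\<close> unfolding s_def t_def maximal_run_def
      by (intro exI[of _ "b - 1"] exI[of _ b]) auto
  qed
  moreover have "s \<le> c" "c \<le> t" using c \<open>b \<le> n\<close> unfolding s_def t_def by auto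
  ultimately obtain j where j: "s \<le> j" "j < t" "mixed M {r..<r+2} {j..<j+2}"
    using mixed_square_in_window c(4) by blast
  then have "j + 1 \<in> {a..b}" "j + 2 \<le> n"
    using \<open>b \<le> n\<close> unfolding s_def t_def by (auto split: if_splits)
  then show ?thesis using j(3) \<open>Suc r < n\<close> unfolding mixed_squares_def i by auto
qed

lemma run_starts_eq_if_overlap:
  assumes "(i, a, b) \<in> run_starts n M" "(i, a', b') \<in> run_starts n M" "c \<in> {a..b}" "c \<in> {a'..b'}"
  shows "a = a' \<and> b = b'"
  using maximal_run_eq_or_apart[of n M i a b a' b'] assms
  unfolding run_starts_def run_start_def by auto

lemma card_run_starts_first_row: "card {x \<in> run_starts n M. fst x = 0} \<le> n"
proof -
  let ?top = "{x \<in> run_starts n M. fst x = 0}"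
  have "inj_on (\<lambda>x. fst (snd x)) ?top"
  proof (rule inj_onI)
    fix x y assume "x \<in> ?top" "y \<in> ?top" and eq: "fst (snd x) = fst (snd y)"
    obtain i a b i' a' b' where xy: "x = (i, a, b)" "y = (i', a', b')" by (metis prod_cases3)
    with \<open>x \<in> ?top\<close> \<open>y \<in> ?top\<close> have "(0, a, b) \<in> run_starts n M" "(0, a', b') \<in> run_starts n M"
      "i = 0" "i' = 0"
      by auto
    moreover from this(1,2) have "a \<in> {a..b}" "a \<in> {a'..b'}"
      using eq xy unfolding run_starts_def run_start_def maximal_run_def by auto
    ultimately have "a = a' \<and> b = b'" by (intro run_starts_eq_if_overlap)
    then show "x = y" using xy \<open>i = 0\<close> \<open>i' = 0\<close> by simp
  qed
  moreover have "(\<lambda>x. fst (snd x)) ` ?top \<subseteq> {..<n}"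
    unfolding run_starts_def run_start_def maximal_run_def by auto
  ultimately show ?thesis using card_inj_on_le[of _ ?top "{..<n}"] by simp
qed

lemma card_run_starts_full_row: "card {x \<in> run_starts n M. snd x = (0, n)} \<le> n"
proof -
  let ?full = "{x \<in> run_starts n M. snd x = (0, n)}"
  have "inj_on fst ?full" by (rule inj_onI) (simp add: prod_eq_iff)
  moreover have "fst ` ?full \<subseteq> {..<n}"
    unfolding run_starts_def run_start_def maximal_run_def by auto
  ultimately show ?thesis using card_inj_on_le[of _ ?full "{..<n}"] by simp
qed

text \<open>Each remaining run start is charged to a mixed square of its row and the row
  above; distinct runs of one row are disjoint, so they are charged to distinct squares.\<close>

lemma card_run_starts_inner:
  "card {x \<in> run_starts n M. fst x \<noteq> 0 \<and> snd x \<noteq> (0, n)} \<le> card (mixed_squares n M)"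
proof -
  let ?inner = "{x \<in> run_starts n M. fst x \<noteq> 0 \<and> snd x \<noteq> (0, n)}"
  have "\<forall>x\<in>?inner. \<exists>j. j + 1 \<in> {fst (snd x)..snd (snd x)} \<and> (fst x - 1, j) \<in> mixed_squares n M"
  proof
    fix x assume "x \<in> ?inner"
    moreover obtain i a b where x: "x = (i, a, b)" by (metis prod_cases3)
    ultimately have "run_start n M i a b" "0 < i" "\<not> (a = 0 \<and> b = n)"
      unfolding run_starts_def by auto
    from mixed_square_below_run_start[OF this]
    show "\<exists>j. j + 1 \<in> {fst (snd x)..snd (snd x)} \<and> (fst x - 1, j) \<in> mixed_squares n M"
      unfolding x by simp
  qed
  from bchoice[OF this] obtain g
    where g: "\<forall>x\<in>?inner. g x + 1 \<in> {fst (snd x)..snd (snd x)} \<and> (fst x - 1, g x) \<in> mixed_squares n M"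
    by blast
  have "inj_on (\<lambda>x. (fst x - 1, g x)) ?inner"
  proof (rule inj_onI)
    fix x y assume "x \<in> ?inner" "y \<in> ?inner" and eq: "(fst x - 1, g x) = (fst y - 1, g y)"
    obtain i a b i' a' b' where xy: "x = (i, a, b)" "y = (i', a', b')" by (metis prod_cases3)
    with \<open>x \<in> ?inner\<close> \<open>y \<in> ?inner\<close> eq
    have "0 < i" "0 < i'" "i - 1 = i' - 1" "(i, a, b) \<in> run_starts n M" "(i', a', b') \<in> run_starts n M"
      by auto
    then have "i = i'" by simp
    then have "(i, a, b) \<in> run_starts n M" "(i, a', b') \<in> run_starts n M"
      using \<open>(i, a, b) \<in> run_starts n M\<close> \<open>(i', a', b') \<in> run_starts n M\<close> by simp_all
    moreover have "g x + 1 \<in> {a..b}" using g \<open>x \<in> ?inner\<close> unfolding xy by auto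
    moreover have "g x + 1 \<in> {a'..b'}" using g \<open>y \<in> ?inner\<close> eq unfolding xy by auto
    ultimately have "a = a' \<and> b = b'" by (rule run_starts_eq_if_overlap)
    then show "x = y" using xy \<open>i = i'\<close> by simp
  qed
  moreover have "(\<lambda>x. (fst x - 1, g x)) ` ?inner \<subseteq> mixed_squares n M"
    using g by auto
  moreover have "finite (mixed_squares n M)"
    by (rule finite_subset[of _ "{..<n} \<times> {..<n}"]) (auto simp: mixed_squares_def)
  ultimately show ?thesis by (rule card_inj_on_le)
qed

lemma card_run_starts: "card (run_starts n M) \<le> n + n + card (mixed_squares n M)"
proof -
  define top where "top = {x \<in> run_starts n M. fst x = 0}"
  define full where "full = {x \<in> run_starts n M. snd x = (0, n)}"
  define inner where "inner = {x \<in> run_starts n M. fst x \<noteq> 0 \<and> snd x \<noteq> (0, n)}"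
  have "run_starts n M = top \<union> full \<union> inner" unfolding top_def full_def inner_def by auto
  then have "card (run_starts n M) \<le> card (top \<union> full) + card inner"
    using card_Un_le[of "top \<union> full" inner] by simp
  also have "\<dots> \<le> card top + card full + card inner"
    using card_Un_le[of top full] by simp
  also have "\<dots> \<le> n + n + card (mixed_squares n M)"
    using card_run_starts_first_row card_run_starts_full_row card_run_starts_inner
    unfolding top_def full_def inner_def by (intro add_mono)
  finally show ?thesis .
qed

theorem lemma6:
  "\<exists>C::nat. \<forall>d n. \<forall>M :: nat \<Rightarrow> nat \<Rightarrow> bool.
     d \<ge> 1 \<longrightarrow> mixed_free n d M \<longrightarrow>
     (\<exists>R. rectangle_decomposition n M R \<and> card R \<le> 2 ^ (C * d) * n)"
proof (intro exI[of _ 56] allI impI)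
  fix d n :: nat and M :: "nat \<Rightarrow> nat \<Rightarrow> bool"
  assume "d \<ge> 1" and mixed_free: "mixed_free n d M"
  then have "0 < d" by simp
  have "(2::nat) ^ x + 2 ^ x = 2 ^ Suc x" for x by simp
  moreover have "(2::nat) \<le> 2 ^ (33*d+22)" using power_increasing[of 1 "33*d+22" "2::nat"] by simp
  moreover have "(2::nat) ^ Suc (33*d+22) \<le> 2 ^ (56*d)" using \<open>0 < d\<close> by (intro power_increasing) auto
  ultimately have const: "2 + 2 ^ (33*d+22) \<le> (2::nat) ^ (56*d)" by (metis add_le_mono1 order_trans)
  have "card (run_rectangles n M) \<le> card (run_starts n M)"
    unfolding run_rectangles_def by (rule card_image_le[OF finite_run_starts])
  also have "\<dots> \<le> n + n + card (mixed_squares n M)" by (rule card_run_starts)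
  also have "\<dots> \<le> (2 + 2 ^ (33*d+22)) * n" using card_mixed_squares[OF \<open>0 < d\<close> mixed_free] by simp
  also have "\<dots> \<le> 2 ^ (56 * d) * n" using const by (rule mult_right_mono) simp
  finally show "\<exists>R. rectangle_decomposition n M R \<and> card R \<le> 2 ^ (56 * d) * n"
    using rectangle_decomposition_run_rectangles by blast
qed

end
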